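(* For every integer $i \geq 0$, there is no bipartite graph $G$ whose independence complex $I(G)$ is homotopy equivalent to the wedge $S^i \vee S^0$.
   Context: For a simple graph $G$, the independence complex $I(G)$ is the simplicial complex on the vertices of $G$ whose simplices are the nonempty sets of pairwise non-adjacent vertices. $S^i \vee S^0$ denotes the one-point union of the $i$-sphere and the $0$-sphere (two points). *)

theory Defs
  imports "HOL-Analysis.Analysis"
begin

definition simple_graph :: "'a set \<Rightarrow> ('a \<Rightarrow> 'a \<Rightarrow> bool) \<Rightarrow> bool" where
  "simple_graph V E \<longleftrightarrow> finite V \<and> (\<forall>x y. E x y \<longrightarrow> x \<in> V \<and> y \<in> V)
      \<and> (\<forall>x. \<not> E x x) \<and> (\<forall>x y. E x y \<longrightarrow> E y x)"

definition bipartite :: "'a set \<Rightarrow> ('a \<Rightarrow> 'a \<Rightarrow> bool) \<Rightarrow> bool" where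
  "bipartite V E \<longleftrightarrow> (\<exists>A B. A \<union> B = V \<and> A \<inter> B = {}
      \<and> (\<forall>x\<in>A. \<forall>y\<in>A. \<not> E x y) \<and> (\<forall>x\<in>B. \<forall>y\<in>B. \<not> E x y))"

definition independent_set :: "'a set \<Rightarrow> ('a \<Rightarrow> 'a \<Rightarrow> bool) \<Rightarrow> 'a set \<Rightarrow> bool" where
  "independent_set V E S \<longleftrightarrow> S \<subseteq> V \<and> (\<forall>x\<in>S. \<forall>y\<in>S. \<not> E x y)"

definition indep_complex :: "'a set \<Rightarrow> ('a \<Rightarrow> 'a \<Rightarrow> bool) \<Rightarrow> 'a set set" where
  "indep_complex V E = {S. S \<noteq> {} \<and> independent_set V E S}"

definition geom_realization :: "'a set \<Rightarrow> 'a set set \<Rightarrow> ('a \<Rightarrow> real) topology" where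
  "geom_realization V K = subtopology (powertop_real UNIV)
     {f. (\<forall>x. 0 \<le> f x) \<and> (\<forall>x. x \<notin> V \<longrightarrow> f x = 0) \<and> sum f V = 1
         \<and> {x\<in>V. 0 < f x} \<in> K}"

text \<open>The wedge S^i v S^0, realised literally in R^(i+1): the unit i-sphere together
  with the 0-sphere {e0, 3 e0} (centre 2 e0, radius 1), which meets it exactly in e0.\<close>
definition wedge_sphere_S0 :: "nat \<Rightarrow> (nat \<Rightarrow> real) topology" where
  "wedge_sphere_S0 i = subtopology (powertop_real UNIV)
     (topspace (nsphere i) \<union> {(\<lambda>j. if j = 0 then 1 else 0), (\<lambda>j. if j = 0 then 3 else 0)})"

end

theory Submission
  imports Defs "HOL-Homology.Homology"
begin

text \<open>Let G be bipartite with parts A and B. If some a in A and b in B are non-adjacent, then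
  every vertex is joined to a by an edge of I(G), directly or through b, and every point of the
  realization is joined by a segment to a vertex of its support, so the realization is path
  connected. Otherwise G is complete bipartite and I(G) is the disjoint union of the full simplices
  on A and on B, two contractible clopen pieces separated by the map h \<mapsto> \<Sum>a\<in>A. h a. Neither
  kind of space is homotopy equivalent to S^i \<or> S^0: the wedge has an isolated point, so it is not
  path connected; for i = 0 it has three path components, more than two pieces can account for;
  and for i \<ge> 1 the sphere would map into a single contractible piece, so the identity of S^i,
  which factors up to homotopy through that piece and the retraction of the wedge onto S^i, would
  be nullhomotopic.\<close>

lemma subtopology_cong_topspace:
  "topspace X \<inter> S = topspace X \<inter> T \<Longrightarrow> subtopology X S = subtopology X T"
  by (metis subtopology_restrict)

lemma path_component_of_intermediate_value:
  assumes "path_component_of X x y" and q: "continuous_map X euclideanreal q"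
    and "q x \<le> c" "c \<le> q y"
  shows "c \<in> q ` topspace X"
proof -
  obtain g where g: "pathin X g" "g 0 = x" "g 1 = y"
    using assms(1) unfolding path_component_of_def by blast
  have "continuous_on {0..1} (q \<circ> g)"
    using continuous_map_compose[OF g(1)[unfolded pathin_def] q]
    by (simp add: continuous_map_iff_continuous)
  then obtain t where "t \<in> {0..1}" "q (g t) = c"
    using IVT'[of "q \<circ> g" 0 c 1] assms g by force
  moreover have "g t \<in> topspace X"
    using g(1) \<open>t \<in> {0..1}\<close> by (auto simp: pathin_def continuous_map_def)
  ultimately show ?thesis by force
qed

lemma path_component_of_eq_on_two_valued:
  assumes xy: "path_component_of X x y" and q: "continuous_map X euclideanreal q"
    and two_valued: "\<forall>z\<in>topspace X. q z = 0 \<or> q z = 1"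
  shows "q x = q y"
proof (rule ccontr)
  assume "q x \<noteq> q y"
  moreover have "x \<in> topspace X" "y \<in> topspace X"
    using xy path_component_of_equiv by fastforce+
  ultimately obtain a b where ab: "path_component_of X a b" "q a = 0" "q b = 1"
    using two_valued xy path_component_of_sym by metis
  then have "1/2 \<in> q ` topspace X"
    by (intro path_component_of_intermediate_value[OF _ q]) auto
  then show False
    using two_valued by fastforce
qed

lemma path_component_of_in_contractible_subtopology:
  assumes "contractible_space (subtopology X S)"
    and "x \<in> topspace X \<inter> S" "y \<in> topspace X \<inter> S"
  shows "path_component_of X x y"
proof -
  have "path_component_of (subtopology X S) x y"
    using contractible_imp_path_connected_space[OF assms(1)] assms(2,3)
    by (simp add: path_connected_space_iff_path_component)
  then show ?thesis
    by (metis path_component_of_mono subset_UNIV subtopology_UNIV)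
qed

lemma homotopic_with_imp_path_component_of:
  assumes "homotopic_with P X Y f g" "x \<in> topspace X"
  shows "path_component_of Y (f x) (g x)"
proof -
  obtain h where h: "continuous_map (prod_topology (top_of_set {0..1::real}) X) Y h"
    "\<forall>x. h (0, x) = f x" "\<forall>x. h (1, x) = g x"
    using assms(1) unfolding homotopic_with_def by blast
  have "continuous_map (top_of_set {0..1}) (prod_topology (top_of_set {0..1::real}) X) (\<lambda>t. (t, x))"
    using assms(2) by (intro continuous_intros) auto
  then have "pathin Y (h \<circ> (\<lambda>t. (t, x)))"
    unfolding pathin_def using h(1) by (rule continuous_map_compose)
  then show ?thesis
    unfolding path_component_of_def using h by force
qed

lemma path_component_of_reflect_homotopy_left_inverse:
  assumes g: "continuous_map Y X g" and gf: "homotopic_with (\<lambda>h. True) X X (g \<circ> f) id"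
    and x: "x1 \<in> topspace X" "x2 \<in> topspace X" and "path_component_of Y (f x1) (f x2)"
  shows "path_component_of X x1 x2"
proof -
  have "path_component_of X (g (f x1)) (g (f x2))"
    by (rule path_component_of_continuous_image[OF g assms(5)])
  moreover have "path_component_of X (g (f x)) x" if "x \<in> topspace X" for x
    using homotopic_with_imp_path_component_of[OF gf that] by simp
  ultimately show ?thesis
    by (meson x path_component_of_sym path_component_of_trans)
qed

lemma nullhomotopic_into_two_contractible_pieces:
  assumes f: "continuous_map X Y f" and X: "path_connected_space X"
    and q: "continuous_map Y euclideanreal q" and two_valued: "\<forall>y\<in>topspace Y. q y = 0 \<or> q y = 1"
    and pieces: "\<And>k. contractible_space (subtopology Y {y. q y = k})"
  obtains c where "homotopic_with (\<lambda>h. True) X Y f (\<lambda>x. c)"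
proof (cases "topspace X = {}")
  case True
  then show ?thesis
    using that f by (simp add: homotopic_on_emptyI)
next
  case False
  then obtain x0 where x0: "x0 \<in> topspace X" by blast
  have "q (f x) = q (f x0)" if "x \<in> topspace X" for x
    using path_component_of_eq_on_two_valued[OF _ q two_valued]
      path_component_of_continuous_image[OF f] X x0 that
    by (meson path_connected_space_iff_path_component)
  then have "continuous_map X (subtopology Y {y. q y = q (f x0)}) f"
    using f by (auto simp: continuous_map_in_subtopology)
  then obtain c where "homotopic_with (\<lambda>h. True) X (subtopology Y {y. q y = q (f x0)}) f (\<lambda>x. c)"
    using nullhomotopic_into_contractible_space pieces by blast
  then have "homotopic_with (\<lambda>h. True) X Y (id \<circ> f) (id \<circ> (\<lambda>x. c))"
    by (rule homotopic_with_compose_continuous_map_left[OF _ continuous_map_id_subt]) simp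
  then show ?thesis
    using that by (simp add: o_def)
qed

lemma contractible_space_retract_nullhomotopic:
  assumes r: "continuous_map W X r" and "\<And>x. x \<in> topspace X \<Longrightarrow> r x = x"
    and "homotopic_with (\<lambda>h. True) X W id (\<lambda>x. c)"
  shows "contractible_space X"
proof -
  have "homotopic_with (\<lambda>h. True) X X (r \<circ> id) (r \<circ> (\<lambda>x. c))"
    by (rule homotopic_with_compose_continuous_map_left[OF assms(3) r]) simp
  then have "homotopic_with (\<lambda>h. True) X X id (\<lambda>x. r c)"
    by (rule homotopic_with_eq) (auto simp: assms(2))
  then show ?thesis
    unfolding contractible_space_def by blast
qed

lemma contractible_space_powertop_convex:
  assumes convex: "\<And>f g t. f \<in> S \<Longrightarrow> g \<in> S \<Longrightarrow> 0 \<le> t \<Longrightarrow> t \<le> 1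
                      \<Longrightarrow> (\<lambda>x. (1 - t) * f x + t * g x) \<in> S"
  shows "contractible_space (subtopology (powertop_real UNIV) S)"
proof (cases "S = {}")
  case False
  then obtain a where a: "a \<in> S" by blast
  let ?X = "subtopology (powertop_real UNIV) S"
  let ?I = "top_of_set {0..1::real}"
  define H where "H = (\<lambda>(t, f) x. (1 - t) * f x + t * a x)"
  have proj: "continuous_map ?X euclideanreal (\<lambda>f. f x)" for x
    by (rule continuous_map_from_subtopology[OF continuous_map_product_projection]) simp
  have "continuous_map (prod_topology ?I ?X) euclideanreal (\<lambda>p. snd p x)" for x
    using continuous_map_compose[OF continuous_map_snd proj] by (simp add: comp_def)
  moreover have "continuous_map (prod_topology ?I ?X) euclideanreal fst"
    using continuous_map_fst[of ?I ?X] by (simp add: continuous_map_in_subtopology)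
  ultimately have "continuous_map (prod_topology ?I ?X) (powertop_real UNIV) H"
    unfolding continuous_map_componentwise_UNIV H_def case_prod_beta
    by (intro allI continuous_intros) auto
  moreover have "H (t, f) \<in> S" if "t \<in> {0..1}" "f \<in> S" for t f
    using convex[OF that(2) a] that(1) by (simp add: H_def)
  ultimately have "continuous_map (prod_topology ?I ?X) ?X H"
    by (auto simp: continuous_map_in_subtopology)
  moreover have "H (0, f) = id f" "H (1, f) = a" for f
    by (simp_all add: H_def)
  ultimately have "homotopic_with (\<lambda>h. True) ?X ?X id (\<lambda>f. a)"
    unfolding homotopic_with_def by metis
  then show ?thesis
    unfolding contractible_space_def by blast
qed simp

text \<open>In the wedge, axis_point 1 is the base point on the sphere and axis_point 3 the other point
  of the 0-sphere.\<close>

definition axis_point :: "real \<Rightarrow> nat \<Rightarrow> real" where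
  "axis_point c = (\<lambda>j. if j = 0 then c else 0)"

lemma axis_point_0 [simp]: "axis_point c 0 = c"
  by (simp add: axis_point_def)

lemma topspace_wedge_sphere_S0:
  "topspace (wedge_sphere_S0 i) = topspace (nsphere i) \<union> {axis_point 1, axis_point 3}"
  by (simp add: wedge_sphere_S0_def axis_point_def)

lemma axis_point_1_in_nsphere: "axis_point 1 \<in> topspace (nsphere i)"
  using in_topspace_nsphere by (simp add: axis_point_def)

lemma axis_point_minus_1_in_nsphere_0: "axis_point (-1) \<in> topspace (nsphere 0)"
  by (simp add: nsphere axis_point_def)

lemma nsphere_coord_abs_le_1:
  assumes "x \<in> topspace (nsphere i)"
  shows "\<bar>x k\<bar> \<le> 1"
proof (cases "k \<le> i")
  case True
  have "(x k)\<^sup>2 \<le> (\<Sum>j\<le>i. (x j)\<^sup>2)"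
    using True by (intro member_le_sum) auto
  also have "\<dots> = 1"
    using assms by (simp add: nsphere)
  finally show ?thesis
    by (simp add: abs_square_le_1)
next
  case False
  then show ?thesis
    using assms by (simp add: nsphere)
qed

lemma subtopology_wedge_sphere_S0_nsphere:
  "subtopology (wedge_sphere_S0 i) (topspace (nsphere i)) = nsphere i"
proof -
  have "nsphere i = subtopology (powertop_real UNIV) (topspace (nsphere i))"
    by (simp add: nsphere)
  then show ?thesis
    unfolding wedge_sphere_S0_def subtopology_subtopology by (metis Int_absorb1 Un_upper1)
qed

lemma continuous_map_wedge_sphere_S0_coord:
  "continuous_map (wedge_sphere_S0 i) euclideanreal (\<lambda>x. x k)"
  unfolding wedge_sphere_S0_def
  by (blast intro: continuous_map_from_subtopology [OF continuous_map_product_projection])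

lemma not_path_component_of_wedge_sphere_S0:
  assumes "x \<in> topspace (nsphere i)"
  shows "\<not> path_component_of (wedge_sphere_S0 i) x (axis_point 3)"
proof
  assume "path_component_of (wedge_sphere_S0 i) x (axis_point 3)"
  moreover have "x 0 \<le> 2"
    using nsphere_coord_abs_le_1[OF assms, of 0] by linarith
  ultimately have "2 \<in> (\<lambda>z. z 0) ` topspace (wedge_sphere_S0 i)"
    by (intro path_component_of_intermediate_value[OF _ continuous_map_wedge_sphere_S0_coord])
      (auto simp: axis_point_def)
  then show False
    by (force simp: topspace_wedge_sphere_S0 axis_point_def dest: nsphere_coord_abs_le_1[where k = 0])
qed

lemma not_path_component_of_wedge_sphere0_S0:
  "\<not> path_component_of (wedge_sphere_S0 0) (axis_point (-1)) (axis_point 1)"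
proof
  assume "path_component_of (wedge_sphere_S0 0) (axis_point (-1)) (axis_point 1)"
  then have "0 \<in> (\<lambda>z. z 0) ` topspace (wedge_sphere_S0 0)"
    by (intro path_component_of_intermediate_value[OF _ continuous_map_wedge_sphere_S0_coord])
      (auto simp: axis_point_def)
  then show False
    by (auto simp: topspace_wedge_sphere_S0 axis_point_def nsphere)
qed

lemma nsphere_fixed_by_truncation:
  assumes "x \<in> topspace (nsphere i)"
  shows "x(0 := min (x 0) 1) = x"
  using nsphere_coord_abs_le_1[OF assms, of 0] by (auto simp: min_def abs_le_iff)

lemma wedge_sphere_S0_retraction:
  "continuous_map (wedge_sphere_S0 i) (nsphere i) (\<lambda>x. x(0 := min (x 0) 1))"
proof -
  have "continuous_map (wedge_sphere_S0 i) (powertop_real UNIV) (\<lambda>x. x(0 := min (x 0) 1))"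
    unfolding continuous_map_componentwise_UNIV fun_upd_apply
    by (intro allI continuous_intros continuous_map_wedge_sphere_S0_coord)
  moreover have "x(0 := min (x 0) 1) \<in> topspace (nsphere i)"
    if "x \<in> topspace (wedge_sphere_S0 i)" for x
  proof -
    have "(axis_point c)(0 := min c 1) = axis_point 1" if "c \<ge> 1" for c
      using that by (auto simp: axis_point_def)
    then show ?thesis
      using that axis_point_1_in_nsphere nsphere_fixed_by_truncation
      by (auto simp: topspace_wedge_sphere_S0)
  qed
  ultimately show ?thesis
    by (subst nsphere) (auto simp: continuous_map_in_subtopology nsphere)
qed

lemma path_connected_space_nsphere:
  assumes "1 \<le> i"
  shows "path_connected_space (nsphere i)"
proof -
  define e :: "nat \<Rightarrow> real" where "e = (\<lambda>j. if j = 1 then 1 else 0)"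
  have e: "e \<in> topspace (nsphere i)"
    using assms by (simp add: e_def nsphere power2_eq_square if_distrib[where f = "\<lambda>x. x * _"] cong: if_cong)
  have "path_component_of (nsphere i) x e" if "x \<in> topspace (nsphere i)" for x
  proof (cases "x 0 \<ge> 0")
    case True
    then show ?thesis
      using path_component_of_in_contractible_subtopology[OF contractible_space_upper_hemisphere, of 0 i]
        that e by (simp add: e_def)
  next
    case False
    then show ?thesis
      using path_component_of_in_contractible_subtopology[OF contractible_space_lower_hemisphere, of 0 i]
        that e by (simp add: e_def)
  qed
  then show ?thesis
    unfolding path_connected_space_iff_path_component
    by (meson path_component_of_sym path_component_of_trans)
qed

lemma path_connected_space_not_homotopy_equivalent_wedge_sphere_S0:
  assumes "path_connected_space Y"
  shows "\<not> Y homotopy_equivalent_space wedge_sphere_S0 i"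
proof
  assume "Y homotopy_equivalent_space wedge_sphere_S0 i"
  then obtain f g where g: "continuous_map (wedge_sphere_S0 i) Y g"
    and f: "continuous_map Y (wedge_sphere_S0 i) f"
    and fg: "homotopic_with (\<lambda>h. True) (wedge_sphere_S0 i) (wedge_sphere_S0 i) (f \<circ> g) id"
    unfolding homotopy_equivalent_space_def by blast
  have e: "axis_point 1 \<in> topspace (wedge_sphere_S0 i)" and p: "axis_point 3 \<in> topspace (wedge_sphere_S0 i)"
    by (simp_all add: topspace_wedge_sphere_S0)
  have "g (axis_point 1) \<in> topspace Y" "g (axis_point 3) \<in> topspace Y"
    using g e p by (auto simp: continuous_map_def)
  then have "path_component_of Y (g (axis_point 1)) (g (axis_point 3))"
    by (rule path_connected_space_imp_path_component_of[OF assms])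
  then have "path_component_of (wedge_sphere_S0 i) (axis_point 1) (axis_point 3)"
    by (rule path_component_of_reflect_homotopy_left_inverse[OF f fg e p])
  then show False
    using not_path_component_of_wedge_sphere_S0[OF axis_point_1_in_nsphere] by blast
qed

lemma two_contractible_pieces_not_homotopy_equivalent_wedge_sphere0_S0:
  assumes q: "continuous_map Y euclideanreal q" and two_valued: "\<forall>y\<in>topspace Y. q y = 0 \<or> q y = 1"
    and pieces: "\<And>k. contractible_space (subtopology Y {y. q y = k})"
  shows "\<not> Y homotopy_equivalent_space wedge_sphere_S0 0"
proof
  let ?W = "wedge_sphere_S0 0"
  assume "Y homotopy_equivalent_space ?W"
  then obtain f g where g: "continuous_map ?W Y g" and f: "continuous_map Y ?W f"
    and fg: "homotopic_with (\<lambda>h. True) ?W ?W (f \<circ> g) id"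
    unfolding homotopy_equivalent_space_def by blast
  have same_piece: "path_component_of ?W w1 w2"
    if w: "w1 \<in> topspace ?W" "w2 \<in> topspace ?W" and "q (g w1) = q (g w2)" for w1 w2
  proof (rule path_component_of_reflect_homotopy_left_inverse[OF f fg w])
    have "g w1 \<in> topspace Y" "g w2 \<in> topspace Y"
      using g w by (auto simp: continuous_map_def)
    then show "path_component_of Y (g w1) (g w2)"
      using \<open>q (g w1) = q (g w2)\<close>
      by (intro path_component_of_in_contractible_subtopology[OF pieces[of "q (g w1)"]]) auto
  qed
  have pts: "axis_point (-1) \<in> topspace ?W" "axis_point 1 \<in> topspace ?W" "axis_point 3 \<in> topspace ?W"
    using axis_point_minus_1_in_nsphere_0 by (auto simp: topspace_wedge_sphere_S0)
  then have vals: "q (g (axis_point c)) = 0 \<or> q (g (axis_point c)) = 1"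
    if "axis_point c \<in> topspace ?W" for c
    using two_valued g that by (auto simp: continuous_map_def)
  consider "q (g (axis_point (-1))) = q (g (axis_point 1))"
    | "q (g (axis_point 1)) = q (g (axis_point 3))"
    | "q (g (axis_point (-1))) = q (g (axis_point 3))"
    using vals[OF pts(1)] vals[OF pts(2)] vals[OF pts(3)] by linarith
  then show False
  proof cases
    case 1
    then show False
      using same_piece[OF pts(1,2)] not_path_component_of_wedge_sphere0_S0 by blast
  next
    case 2
    then show False
      using same_piece[OF pts(2,3)] not_path_component_of_wedge_sphere_S0[OF axis_point_1_in_nsphere]
      by blast
  next
    case 3
    then show False
      using same_piece[OF pts(1,3)]
        not_path_component_of_wedge_sphere_S0[OF axis_point_minus_1_in_nsphere_0] by blast
  qed
qed

lemma two_contractible_pieces_not_homotopy_equivalent_wedge_sphere_S0_pos: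
  assumes q: "continuous_map Y euclideanreal q" and two_valued: "\<forall>y\<in>topspace Y. q y = 0 \<or> q y = 1"
    and pieces: "\<And>k. contractible_space (subtopology Y {y. q y = k})"
    and "1 \<le> i"
  shows "\<not> Y homotopy_equivalent_space wedge_sphere_S0 i"
proof
  let ?W = "wedge_sphere_S0 i"
  assume "Y homotopy_equivalent_space ?W"
  then obtain f g where g: "continuous_map ?W Y g" and f: "continuous_map Y ?W f"
    and fg: "homotopic_with (\<lambda>h. True) ?W ?W (f \<circ> g) id"
    unfolding homotopy_equivalent_space_def by blast
  have "continuous_map (nsphere i) Y g"
    using continuous_map_from_subtopology[OF g, of "topspace (nsphere i)"]
    by (simp add: subtopology_wedge_sphere_S0_nsphere)
  then obtain c where "homotopic_with (\<lambda>h. True) (nsphere i) Y g (\<lambda>x. c)"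
    using nullhomotopic_into_two_contractible_pieces[OF _ path_connected_space_nsphere q two_valued pieces]
      \<open>1 \<le> i\<close> by blast
  then have "homotopic_with (\<lambda>h. True) (nsphere i) ?W (f \<circ> g) (f \<circ> (\<lambda>x. c))"
    by (rule homotopic_with_compose_continuous_map_left[OF _ f]) simp
  then have "homotopic_with (\<lambda>h. True) (nsphere i) ?W (f \<circ> g) (\<lambda>x. f c)"
    by (simp add: o_def)
  moreover have "homotopic_with (\<lambda>h. True) (nsphere i) ?W (f \<circ> g) id"
    using homotopic_from_subtopology[OF fg, of "topspace (nsphere i)"]
    by (simp add: subtopology_wedge_sphere_S0_nsphere)
  ultimately have "homotopic_with (\<lambda>h. True) (nsphere i) ?W id (\<lambda>x. f c)"
    using homotopic_with_trans homotopic_with_symD by metis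
  then have "contractible_space (nsphere i)"
    using contractible_space_retract_nullhomotopic[OF wedge_sphere_S0_retraction]
      nsphere_fixed_by_truncation by blast
  then show False
    using non_contractible_space_nsphere by blast
qed

lemma two_contractible_pieces_not_homotopy_equivalent_wedge_sphere_S0:
  assumes "continuous_map Y euclideanreal q" "\<forall>y\<in>topspace Y. q y = 0 \<or> q y = 1"
    and "\<And>k. contractible_space (subtopology Y {y. q y = k})"
  shows "\<not> Y homotopy_equivalent_space wedge_sphere_S0 i"
proof (cases "i = 0")
  case True
  then show ?thesis
    using two_contractible_pieces_not_homotopy_equivalent_wedge_sphere0_S0[OF assms] by simp
next
  case False
  then show ?thesis
    using two_contractible_pieces_not_homotopy_equivalent_wedge_sphere_S0_pos[OF assms] by simp
qed

lemma independent_set_subset: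
  "independent_set V E C \<Longrightarrow> D \<subseteq> C \<Longrightarrow> independent_set V E D"
  by (auto simp: independent_set_def)

lemma nonneg_sum_eq_1_imp_pos:
  fixes h :: "'a \<Rightarrow> real"
  assumes "\<forall>x. 0 \<le> h x" "sum h V = 1"
  obtains v where "v \<in> V" "0 < h v"
proof -
  have "\<not> (\<forall>x\<in>V. h x = 0)"
  proof
    assume "\<forall>x\<in>V. h x = 0"
    then have "sum h V = 0"
      by simp
    then show False
      using assms(2) by simp
  qed
  then obtain v where "v \<in> V" "h v \<noteq> 0"
    by blast
  then show ?thesis
    using assms(1) that by (simp add: order_less_le)
qed

lemma geom_realization_eq_subtopology:
  "geom_realization V K = subtopology (powertop_real UNIV) (topspace (geom_realization V K))"
  by (simp add: geom_realization_def)

lemma continuous_map_geom_realization_sum: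
  assumes "finite A"
  shows "continuous_map (geom_realization V K) euclideanreal (\<lambda>h. sum h A)"
proof -
  have "continuous_map (geom_realization V K) euclideanreal (\<lambda>h. h a)" for a
    unfolding geom_realization_def
    by (rule continuous_map_from_subtopology[OF continuous_map_product_projection]) simp
  then show ?thesis
    by (rule continuous_map_sum[OF assms])
qed

lemma topspace_geom_realization_indep_complex:
  "h \<in> topspace (geom_realization V (indep_complex V E)) \<longleftrightarrow>
     (\<forall>x. 0 \<le> h x) \<and> (\<forall>x. x \<notin> V \<longrightarrow> h x = 0) \<and> sum h V = 1
     \<and> independent_set V E {x\<in>V. 0 < h x}"
proof -
  have "{x\<in>V. 0 < h x} \<noteq> {}" if "\<forall>x. 0 \<le> h x" "sum h V = 1"
    using nonneg_sum_eq_1_imp_pos[OF that] by blast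
  then show ?thesis
    by (auto simp: geom_realization_def indep_complex_def)
qed

lemma geom_realization_indep_complex_zero_outside_support:
  assumes "h \<in> topspace (geom_realization V (indep_complex V E))" "x \<notin> {x\<in>V. 0 < h x}"
  shows "h x = 0"
proof -
  have "0 \<le> h x" "x \<notin> V \<longrightarrow> h x = 0"
    using assms(1) by (simp_all add: topspace_geom_realization_indep_complex)
  then show ?thesis
    using assms(2) by auto
qed

lemma geom_realization_indep_complex_face_convex:
  assumes C: "independent_set V E C"
    and h1: "h1 \<in> topspace (geom_realization V (indep_complex V E))" "\<forall>x. x \<notin> C \<longrightarrow> h1 x = 0"
    and h2: "h2 \<in> topspace (geom_realization V (indep_complex V E))" "\<forall>x. x \<notin> C \<longrightarrow> h2 x = 0"
    and t: "0 \<le> t" "t \<le> 1"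
  shows "(\<lambda>x. (1 - t) * h1 x + t * h2 x) \<in> topspace (geom_realization V (indep_complex V E))"
proof -
  let ?h = "\<lambda>x. (1 - t) * h1 x + t * h2 x"
  have "sum ?h V = (1 - t) * sum h1 V + t * sum h2 V"
    by (simp add: sum.distrib sum_distrib_left)
  moreover have "{x\<in>V. 0 < ?h x} \<subseteq> C"
    using h1(2) h2(2) by force
  then have "independent_set V E {x\<in>V. 0 < ?h x}"
    by (rule independent_set_subset[OF C])
  ultimately show ?thesis
    using h1(1) h2(1) t by (simp add: topspace_geom_realization_indep_complex)
qed

lemma contractible_space_geom_realization_indep_complex_face:
  assumes "independent_set V E C"
  shows "contractible_space
           (subtopology (geom_realization V (indep_complex V E)) {h. \<forall>x. x \<notin> C \<longrightarrow> h x = 0})"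
proof -
  let ?Y = "geom_realization V (indep_complex V E)"
  have "subtopology ?Y {h. \<forall>x. x \<notin> C \<longrightarrow> h x = 0}
      = subtopology (powertop_real UNIV) (topspace ?Y \<inter> {h. \<forall>x. x \<notin> C \<longrightarrow> h x = 0})"
    by (subst geom_realization_eq_subtopology) (simp add: subtopology_subtopology)
  also have "contractible_space \<dots>"
    by (rule contractible_space_powertop_convex)
      (auto intro: geom_realization_indep_complex_face_convex[OF assms])
  finally show ?thesis .
qed

lemma path_component_of_geom_realization_indep_complex_face:
  assumes "independent_set V E C"
    and "h1 \<in> topspace (geom_realization V (indep_complex V E))" "\<forall>x. x \<notin> C \<longrightarrow> h1 x = 0"
    and "h2 \<in> topspace (geom_realization V (indep_complex V E))" "\<forall>x. x \<notin> C \<longrightarrow> h2 x = 0"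
  shows "path_component_of (geom_realization V (indep_complex V E)) h1 h2"
  using assms
  by (intro path_component_of_in_contractible_subtopology
      [OF contractible_space_geom_realization_indep_complex_face]) auto

lemma indicator_in_geom_realization_indep_complex:
  assumes "finite V" "independent_set V E {v}"
  shows "indicator {v} \<in> topspace (geom_realization V (indep_complex V E))"
proof -
  have "v \<in> V"
    using assms(2) by (simp add: independent_set_def)
  then have "{x\<in>V. 0 < (indicator {v} x :: real)} = {v}"
    by (auto split: split_indicator)
  then show ?thesis
    using assms \<open>v \<in> V\<close> by (auto simp: topspace_geom_realization_indep_complex indicator_def)
qed

lemma path_component_of_geom_realization_indep_complex_indicator:
  assumes "finite V" "independent_set V E {u, w}"
  shows "path_component_of (geom_realization V (indep_complex V E)) (indicator {u}) (indicator {w})"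
proof -
  have "independent_set V E {u}" "independent_set V E {w}"
    using independent_set_subset[OF assms(2)] by auto
  then show ?thesis
    using assms by (intro path_component_of_geom_realization_indep_complex_face[of V E "{u, w}"])
      (auto intro: indicator_in_geom_realization_indep_complex simp: indicator_def)
qed

lemma path_component_of_geom_realization_indep_complex_vertex:
  assumes "finite V" and y: "y \<in> topspace (geom_realization V (indep_complex V E))"
    and v: "v \<in> V" "0 < y v"
  shows "path_component_of (geom_realization V (indep_complex V E)) y (indicator {v})"
proof -
  let ?C = "{x\<in>V. 0 < y x}"
  have C: "independent_set V E ?C"
    using y by (simp add: topspace_geom_realization_indep_complex)
  then have "independent_set V E {v}"
    using v by (auto intro: independent_set_subset)
  moreover have "\<forall>x. x \<notin> ?C \<longrightarrow> y x = 0"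
    using geom_realization_indep_complex_zero_outside_support[OF y] by blast
  ultimately show ?thesis
    using C y v assms(1)
    by (intro path_component_of_geom_realization_indep_complex_face[of V E ?C])
      (auto intro: indicator_in_geom_realization_indep_complex simp: indicator_def)
qed

lemma path_connected_space_geom_realization_bipartite:
  assumes "finite V" and sym: "\<And>x y. E x y \<Longrightarrow> E y x"
    and AB: "A \<union> B = V" and A: "independent_set V E A" and B: "independent_set V E B"
    and ab: "a \<in> A" "b \<in> B" "\<not> E a b"
  shows "path_connected_space (geom_realization V (indep_complex V E))"
proof -
  let ?Y = "geom_realization V (indep_complex V E)"
  have ba: "path_component_of ?Y (indicator {b}) (indicator {a})"
  proof (rule path_component_of_geom_realization_indep_complex_indicator[OF \<open>finite V\<close>])
    have "\<not> E b a"
      using ab(3) sym by blast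
    then show "independent_set V E {b, a}"
      using A B ab by (auto simp: independent_set_def)
  qed
  have "path_component_of ?Y y (indicator {a})" if y: "y \<in> topspace ?Y" for y
  proof -
    obtain v where v: "v \<in> V" "0 < y v"
      using y nonneg_sum_eq_1_imp_pos by (auto simp: topspace_geom_realization_indep_complex)
    then have yv: "path_component_of ?Y y (indicator {v})"
      by (rule path_component_of_geom_realization_indep_complex_vertex[OF \<open>finite V\<close> y])
    show ?thesis
    proof (cases "v \<in> A")
      case True
      then have "independent_set V E {v, a}"
        using A ab by (auto intro: independent_set_subset)
      then show ?thesis
        by (rule path_component_of_trans[OF yv
              path_component_of_geom_realization_indep_complex_indicator[OF \<open>finite V\<close>]])
    next
      case False
      then have "independent_set V E {v, b}"
        using B ab v AB by (auto intro: independent_set_subset)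
      then have "path_component_of ?Y (indicator {v}) (indicator {b})"
        by (rule path_component_of_geom_realization_indep_complex_indicator[OF \<open>finite V\<close>])
      then show ?thesis
        using yv ba by (meson path_component_of_trans)
    qed
  qed
  then show ?thesis
    unfolding path_connected_space_iff_path_component
    by (meson path_component_of_sym path_component_of_trans)
qed

lemma geom_realization_complete_bipartite_faces:
  assumes y: "y \<in> topspace (geom_realization V (indep_complex V E))"
    and AB: "A \<union> B = V" and complete: "\<forall>a\<in>A. \<forall>b\<in>B. E a b"
  shows "(\<forall>x. x \<notin> A \<longrightarrow> y x = 0) \<or> (\<forall>x. x \<notin> B \<longrightarrow> y x = 0)"
proof (rule ccontr)
  assume "\<not> ?thesis"
  then obtain a b where "a \<notin> A" "y a \<noteq> 0" "b \<notin> B" "y b \<noteq> 0"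
    by blast
  then have "a \<in> {x\<in>V. 0 < y x} \<inter> B" "b \<in> {x\<in>V. 0 < y x} \<inter> A"
    using geom_realization_indep_complex_zero_outside_support[OF y] AB by blast+
  moreover have "independent_set V E {x\<in>V. 0 < y x}"
    using y by (simp add: topspace_geom_realization_indep_complex)
  ultimately show False
    using complete by (auto simp: independent_set_def)
qed

lemma geom_realization_complete_bipartite_sum_iff:
  assumes "finite V" and y: "y \<in> topspace (geom_realization V (indep_complex V E))"
    and AB: "A \<union> B = V" "A \<inter> B = {}" and complete: "\<forall>a\<in>A. \<forall>b\<in>B. E a b"
  shows "sum y A = 1 \<longleftrightarrow> (\<forall>x. x \<notin> A \<longrightarrow> y x = 0)"
    and "sum y A = 0 \<longleftrightarrow> (\<forall>x. x \<notin> B \<longrightarrow> y x = 0)"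
proof -
  have "sum y A = sum y V" if "\<forall>x. x \<notin> A \<longrightarrow> y x = 0"
    using that AB(1) \<open>finite V\<close> by (intro sum.mono_neutral_left) auto
  moreover have "sum y A = 0" if "\<forall>x. x \<notin> B \<longrightarrow> y x = 0"
    using that AB(2) by (intro sum.neutral) auto
  moreover have "sum y V = 1"
    using y by (simp add: topspace_geom_realization_indep_complex)
  ultimately show "sum y A = 1 \<longleftrightarrow> (\<forall>x. x \<notin> A \<longrightarrow> y x = 0)"
    and "sum y A = 0 \<longleftrightarrow> (\<forall>x. x \<notin> B \<longrightarrow> y x = 0)"
    using geom_realization_complete_bipartite_faces[OF y AB(1) complete] by auto
qed

lemma geom_realization_complete_bipartite_pieces:
  assumes "finite V" and AB: "A \<union> B = V" "A \<inter> B = {}"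
    and A: "independent_set V E A" and B: "independent_set V E B"
    and complete: "\<forall>a\<in>A. \<forall>b\<in>B. E a b"
  defines "Y \<equiv> geom_realization V (indep_complex V E)"
  shows "\<forall>y\<in>topspace Y. sum y A = 0 \<or> sum y A = 1"
    and "contractible_space (subtopology Y {y. sum y A = k})"
proof -
  note sum_iff = geom_realization_complete_bipartite_sum_iff[OF \<open>finite V\<close> _ AB complete,
      folded Y_def]
  show two_valued: "\<forall>y\<in>topspace Y. sum y A = 0 \<or> sum y A = 1"
    using geom_realization_complete_bipartite_faces[OF _ AB(1) complete] sum_iff
    unfolding Y_def by blast
  consider "k = 1" | "k = 0" | "k \<noteq> 0" "k \<noteq> 1"
    by blast
  then show "contractible_space (subtopology Y {y. sum y A = k})"
  proof cases
    case 1
    then have "topspace Y \<inter> {y. sum y A = k} = topspace Y \<inter> {h. \<forall>x. x \<notin> A \<longrightarrow> h x = 0}"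
      using sum_iff(1) by auto
    then have "subtopology Y {y. sum y A = k} = subtopology Y {h. \<forall>x. x \<notin> A \<longrightarrow> h x = 0}"
      by (rule subtopology_cong_topspace)
    then show ?thesis
      using contractible_space_geom_realization_indep_complex_face[OF A] by (simp add: Y_def)
  next
    case 2
    then have "topspace Y \<inter> {y. sum y A = k} = topspace Y \<inter> {h. \<forall>x. x \<notin> B \<longrightarrow> h x = 0}"
      using sum_iff(2) by auto
    then have "subtopology Y {y. sum y A = k} = subtopology Y {h. \<forall>x. x \<notin> B \<longrightarrow> h x = 0}"
      by (rule subtopology_cong_topspace)
    then show ?thesis
      using contractible_space_geom_realization_indep_complex_face[OF B] by (simp add: Y_def)
  next
    case 3
    then have "topspace Y \<inter> {y. sum y A = k} = {}"
      using two_valued by auto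
    then show ?thesis
      by (metis contractible_space_empty subtopology_trivial_iff)
  qed
qed

theorem mainTheorem5:
  fixes i :: nat and V :: "'a set" and E :: "'a \<Rightarrow> 'a \<Rightarrow> bool"
  assumes "simple_graph V E" and "bipartite V E"
  shows "\<not> (geom_realization V (indep_complex V E)) homotopy_equivalent_space (wedge_sphere_S0 i)"
proof -
  have "finite V" and sym: "\<And>x y. E x y \<Longrightarrow> E y x"
    using assms(1) by (auto simp: simple_graph_def)
  obtain A B where AB: "A \<union> B = V" "A \<inter> B = {}"
    and A: "independent_set V E A" and B: "independent_set V E B"
    using assms(2) by (auto simp: bipartite_def independent_set_def)
  show ?thesis
  proof (cases "\<forall>a\<in>A. \<forall>b\<in>B. E a b")
    case True
    note pieces = geom_realization_complete_bipartite_pieces[OF \<open>finite V\<close> AB A B True]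
    have "finite A"
      using \<open>finite V\<close> AB(1) by (metis finite_Un)
    then show ?thesis
      by (intro two_contractible_pieces_not_homotopy_equivalent_wedge_sphere_S0
          [OF continuous_map_geom_realization_sum pieces])
  next
    case False
    then obtain a b where "a \<in> A" "b \<in> B" "\<not> E a b"
      by blast
    then show ?thesis
      by (intro path_connected_space_not_homotopy_equivalent_wedge_sphere_S0
          path_connected_space_geom_realization_bipartite[OF \<open>finite V\<close> sym AB(1) A B])
  qed
qed

end
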